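(* Let $f:\mathbb{R}^n\to\mathbb{R}^m$ be an asymptotically affine function. For any $\epsilon>0$ there exist a compact set $K\subset\mathbb{R}^n$ and a function $F:\mathbb{R}^n\to\mathbb{R}^m$ such that: (1) $F$ is the feedforward function of a radial neural network whose hidden widths are $(n+1,n+2,\dots,n+N)$, i.e. whose widths vector is $(n,n+1,\dots,n+N,m)$, where $N=N(f,K,\epsilon)$; (2) $|F(x)-f(x)|<\epsilon$ for every $x\in\mathbb{R}^n$.
   Context: For $c\in\mathbb{R}^n$ and $r>0$, $B_r(c)=\{x\in\mathbb{R}^n: |x-c|<r\}$. An affine map $\mathbb{R}^n\to\mathbb{R}^m$ is one of the form $x\mapsto Ax+b$. A continuous $f:\mathbb{R}^n\to\mathbb{R}^m$ is asymptotically affine if there is an affine map $L:\mathbb{R}^n\to\mathbb{R}^m$ such that for every $\epsilon>0$ there is a compact $K\subset\mathbb{R}^n$ with $|L(x)-f(x)|<\epsilon$ for all $x\in\mathbb{R}^n\setminus K$. For a compact $K\subset\mathbb{R}^n$, a continuous $f$ defined on $K$ (or on $\mathbb{R}^n$, in which case one uses its restriction to $K$) and $\epsilon>0$, $N(f,K,\epsilon)$ denotes the minimal $N$ such that there exist $c_1,\dots,c_N\in K$ and $r_1,\dots,r_N\in(0,1)$ with $K\subseteq\bigcup_i B_{r_i}(c_i)$ and $f(B_{r_i}(c_i)\cap K)\subseteq B_\epsilon(f(c_i))$ for all $i$. For a function $h:\mathbb{R}\to\mathbb{R}$ and $n\ge1$, $h^{(n)}:\mathbb{R}^n\to\mathbb{R}^n$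 is $h^{(n)}(v)=h(|v|)\,v/|v|$ for $v\neq0$ and $h^{(n)}(0)=0$; a radial rescaling function on $\mathbb{R}^n$ is a map of the form $h^{(n)}$ with $h$ piecewise differentiable. A radial neural network with widths vector $(n_0,\dots,n_L)$ consists of weights $W_i\in\mathbb{R}^{n_i\times n_{i-1}}$, biases $b_i\in\mathbb{R}^{n_i}$ and radial rescaling functions $\rho_i:\mathbb{R}^{n_i}\to\mathbb{R}^{n_i}$, $i=1,\dots,L$; its hidden widths are $(n_1,\dots,n_{L-1})$. Its feedforward function is $F=F_L$ where $F_0=\mathrm{id}_{\mathbb{R}^{n_0}}$ and $F_i(x)=\rho_i(W_iF_{i-1}(x)+b_i)$. *)

theory Defs
  imports "HOL-Analysis.Analysis"
begin

text \<open>Convention: a vector of R^k is represented as a function nat => real that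
  vanishes at all indices i >= k (zero padding). This uniform carrier is needed
  because the statement involves spaces R^(n+1), ..., R^(n+N) of varying dimension.
  On vecs k the product topology of nat => real coincides with the Euclidean one.\<close>

definition vecs :: "nat \<Rightarrow> (nat \<Rightarrow> real) set" where
  "vecs k = {v. \<forall>i\<ge>k. v i = 0}"

definition vnorm :: "nat \<Rightarrow> (nat \<Rightarrow> real) \<Rightarrow> real" where
  "vnorm k v = sqrt (\<Sum>i<k. (v i)\<^sup>2)"

definition vball :: "nat \<Rightarrow> (nat \<Rightarrow> real) \<Rightarrow> real \<Rightarrow> (nat \<Rightarrow> real) set" where
  "vball k c r = {x \<in> vecs k. vnorm k (\<lambda>j. x j - c j) < r}"

definition affine_app :: "nat \<Rightarrow> nat \<Rightarrow> (nat \<Rightarrow> nat \<Rightarrow> real) \<Rightarrow> (nat \<Rightarrow> real)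
    \<Rightarrow> (nat \<Rightarrow> real) \<Rightarrow> (nat \<Rightarrow> real)" where
  "affine_app a b A c x = (\<lambda>i. if i < b then (\<Sum>j<a. A i j * x j) + c i else 0)"

definition asymptotically_affine ::
    "nat \<Rightarrow> nat \<Rightarrow> ((nat \<Rightarrow> real) \<Rightarrow> (nat \<Rightarrow> real)) \<Rightarrow> bool" where
  "asymptotically_affine n m f \<longleftrightarrow>
     (\<forall>x\<in>vecs n. f x \<in> vecs m) \<and> continuous_on (vecs n) f \<and>
     (\<exists>A c. \<forall>\<epsilon>>0. \<exists>K. K \<subseteq> vecs n \<and> compact K \<and>
        (\<forall>x\<in>vecs n - K. vnorm m (\<lambda>i. affine_app n m A c x i - f x i) < \<epsilon>))"

definition good_cover ::
    "nat \<Rightarrow> nat \<Rightarrow> ((nat \<Rightarrow> real) \<Rightarrow> (nat \<Rightarrow> real)) \<Rightarrow> (nat \<Rightarrow> real) set \<Rightarrow> real \<Rightarrow> nat \<Rightarrow> bool" where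
  "good_cover n m f K \<epsilon> N \<longleftrightarrow>
     (\<exists>c r. (\<forall>i<N. c i \<in> K \<and> 0 < r i \<and> r i < 1) \<and>
            K \<subseteq> (\<Union>i<N. vball n (c i) (r i)) \<and>
            (\<forall>i<N. \<forall>x \<in> vball n (c i) (r i) \<inter> K. vnorm m (\<lambda>j. f x j - f (c i) j) < \<epsilon>))"

definition Ncov ::
    "nat \<Rightarrow> nat \<Rightarrow> ((nat \<Rightarrow> real) \<Rightarrow> (nat \<Rightarrow> real)) \<Rightarrow> (nat \<Rightarrow> real) set \<Rightarrow> real \<Rightarrow> nat" where
  "Ncov n m f K \<epsilon> = (LEAST N. good_cover n m f K \<epsilon> N)"

text \<open>Piecewise differentiable h : R -> R: R splits into finitely many intervals
  on whose interiors h is differentiable, i.e. h is differentiable outside a finite set.\<close>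
definition piecewise_diff :: "(real \<Rightarrow> real) \<Rightarrow> bool" where
  "piecewise_diff h \<longleftrightarrow> (\<exists>T. finite T \<and> (\<forall>x. x \<notin> T \<longrightarrow> h differentiable (at x)))"

definition radial :: "nat \<Rightarrow> (real \<Rightarrow> real) \<Rightarrow> (nat \<Rightarrow> real) \<Rightarrow> (nat \<Rightarrow> real)" where
  "radial k h v = (if vnorm k v = 0 then (\<lambda>_. 0)
                   else (\<lambda>i. if i < k then h (vnorm k v) / vnorm k v * v i else 0))"

fun feedforward :: "nat list \<Rightarrow> ((nat \<Rightarrow> nat \<Rightarrow> real) \<times> (nat \<Rightarrow> real) \<times> (real \<Rightarrow> real)) list
    \<Rightarrow> (nat \<Rightarrow> real) \<Rightarrow> (nat \<Rightarrow> real)" where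
  "feedforward (n0 # n1 # ns) ((W, b, h) # ls) x =
     feedforward (n1 # ns) ls (radial n1 h (affine_app n0 n1 W b x))"
| "feedforward _ _ x = x"

definition is_radial_nn_function :: "nat list \<Rightarrow> ((nat \<Rightarrow> real) \<Rightarrow> (nat \<Rightarrow> real)) \<Rightarrow> bool" where
  "is_radial_nn_function ws F \<longleftrightarrow>
     (\<exists>layers. length ws = length layers + 1 \<and>
        (\<forall>(W, b, h) \<in> set layers. piecewise_diff h) \<and>
        (\<forall>x \<in> vecs (hd ws). F x = feedforward ws layers x))"

end

theory Submission
  imports Defs
begin

text \<open>Outside a compact set \<open>K\<^sub>0\<close> the map \<open>f\<close> is \<open>\<epsilon>\<close>-close to an affine map \<open>L\<close>, and by
  continuity \<open>K\<^sub>0\<close> is covered by finitely many balls \<open>B\<^sub>j = B(p\<^sub>j, r\<^sub>j)\<close>, \<open>j < M\<close>, of radius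
  below 1 on each of which \<open>f\<close> varies by less than \<open>\<epsilon>\<close>. Hidden layer \<open>k\<close> appends a coordinate
  set to 1, translates by \<open>-p\<^sub>k\<close> and annihilates its input when the norm is below
  \<open>sqrt (1 + r\<^sub>k\<^sup>2)\<close>; this happens exactly when \<open>x \<in> B\<^sub>k\<close> and \<open>x\<close> lies in no earlier ball, and
  an annihilated input stays recognisable in all later layers. The affine output layer
  then returns \<open>f(p\<^sub>j)\<close> on the first ball \<open>B\<^sub>j\<close> containing \<open>x\<close> and \<open>L x\<close> off all balls.

  Since \<open>N(f,K,\<epsilon>)\<close> only controls \<open>f\<close> on \<open>B\<^sub>i \<inter> K\<close>, the balls are not taken from a minimal
  cover. Instead \<open>K\<close> is \<open>K\<^sub>0\<close> together with \<open>M\<close> points at mutual distance 2, which forces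
  \<open>N(f,K,\<epsilon>) \<ge> M\<close>; the surplus layers have threshold 0 and act as the identity.\<close>

lemma vnorm_eq_L2_set: "vnorm k v = L2_set v {..<k}"
  unfolding vnorm_def L2_set_def ..

lemma vnorm_nonneg [simp]: "0 \<le> vnorm k v"
  by (simp add: vnorm_eq_L2_set)

lemma abs_le_vnorm: "i < k \<Longrightarrow> \<bar>v i\<bar> \<le> vnorm k v"
  using member_le_L2_set[of "{..<k}" i "\<lambda>i. \<bar>v i\<bar>"] by (simp add: vnorm_eq_L2_set L2_set_def)

lemma vnorm_cong: "(\<And>i. i < k \<Longrightarrow> u i = v i) \<Longrightarrow> vnorm k u = vnorm k v"
  unfolding vnorm_def by simp

lemma vnorm_diff_commute: "vnorm k (\<lambda>i. x i - y i) = vnorm k (\<lambda>i. y i - x i)"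
  unfolding vnorm_def by (simp add: power2_commute)

lemma vnorm_zero [simp]: "vnorm k (\<lambda>i. 0) = 0"
  unfolding vnorm_def by simp

lemma vnorm_triangle:
  "vnorm k (\<lambda>i. x i - z i) \<le> vnorm k (\<lambda>i. x i - y i) + vnorm k (\<lambda>i. y i - z i)"
  using L2_set_triangle_ineq[of "\<lambda>i. x i - y i" "\<lambda>i. y i - z i" "{..<k}"]
  by (simp add: vnorm_eq_L2_set)

lemma vnorm_eq_0_vecs: "v \<in> vecs k \<Longrightarrow> vnorm k v = 0 \<longleftrightarrow> v = (\<lambda>_. 0)"
  by (auto simp: vnorm_eq_L2_set L2_set_eq_0_iff vecs_def fun_eq_iff) (metis lessThan_iff not_le)

lemma vnorm_less_iff_power2: "0 \<le> r \<Longrightarrow> vnorm k v < r \<longleftrightarrow> (\<Sum>i<k. (v i)\<^sup>2) < r\<^sup>2"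
  unfolding vnorm_def by (metis abs_of_nonneg real_sqrt_abs real_sqrt_less_iff)

lemma open_vnorm_less: "open {x. vnorm k (\<lambda>i. x i - y i) < r}"
  unfolding vnorm_def
  by (intro open_Collect_less continuous_intros continuous_on_product_coordinates)

lemma open_contains_vball:
  assumes "open V" "y \<in> V" "y \<in> vecs n"
  obtains \<delta> where "\<delta> > 0" "vball n y \<delta> \<subseteq> V"
proof -
  obtain \<eta> where "\<eta> > 0" "ball y \<eta> \<subseteq> V"
    using assms open_contains_ball by blast
  obtain N where N: "(1/2::real)^N < \<eta>/2"
    using real_arch_pow_inv[of "\<eta>/2" "1/2::real"] \<open>\<eta> > 0\<close> by auto
  have "x \<in> V" if x: "x \<in> vball n y (\<eta>/4)" for x
  proof -
    have "dist (x j) (y j) \<le> vnorm n (\<lambda>i. x i - y i)" for j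
      using abs_le_vnorm[of j n "\<lambda>i. x i - y i"] x assms(3)
      by (cases "j < n") (auto simp: dist_real_def vball_def vecs_def)
    then have "Max {dist (x (from_nat k)) (y (from_nat k)) |k. k \<le> N} \<le> vnorm n (\<lambda>i. x i - y i)"
      by (subst Max_le_iff) auto
    \<comment> \<open>the product metric on \<open>nat \<Rightarrow> real\<close> is controlled by finitely many coordinates\<close>
    then have "dist x y < \<eta>"
      using dist_fun_le_dist_first_terms[of x y N] N x by (simp add: vball_def)
    then show ?thesis using \<open>ball y \<eta> \<subseteq> V\<close> by (auto simp: dist_commute)
  qed
  then show ?thesis using that[of "\<eta>/4"] \<open>\<eta> > 0\<close> by auto
qed

lemma continuous_on_vecs_vball:
  assumes "continuous_on (vecs n) f" "y \<in> vecs n" "\<epsilon> > 0"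
  obtains \<delta> where "\<delta> > 0" "\<forall>x\<in>vball n y \<delta>. vnorm m (\<lambda>i. f x i - f y i) < \<epsilon>"
proof -
  define U where "U = {u. vnorm m (\<lambda>i. u i - f y i) < \<epsilon>}"
  have "continuous (at y within vecs n) f"
    using assms(1,2) continuous_on_eq_continuous_within by blast
  moreover have "open U" "f y \<in> U"
    using open_vnorm_less assms(3) by (auto simp: U_def)
  ultimately obtain V where V: "open V" "y \<in> V" "\<forall>x\<in>vecs n. x \<in> V \<longrightarrow> f x \<in> U"
    unfolding continuous_within_topological by metis
  obtain \<delta> where "\<delta> > 0" "vball n y \<delta> \<subseteq> V"
    using open_contains_vball[OF V(1,2) assms(2)] .
  then show ?thesis using that V(3) by (auto simp: vball_def U_def)
qed

lemma compact_vball_cover: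
  assumes "continuous_on (vecs n) f" "K \<subseteq> vecs n" "compact K" "\<epsilon> > 0"
  obtains M :: nat and p r where "\<forall>j<M. p j \<in> K \<and> 0 < r j \<and> r j < 1"
    "K \<subseteq> (\<Union>j<M. vball n (p j) (r j))"
    "\<forall>j<M. \<forall>x\<in>vball n (p j) (r j). vnorm m (\<lambda>i. f x i - f (p j) i) < \<epsilon>"
proof -
  have "\<exists>\<delta>. 0 < \<delta> \<and> \<delta> < 1 \<and> (\<forall>x\<in>vball n y \<delta>. vnorm m (\<lambda>i. f x i - f y i) < \<epsilon>)"
    if "y \<in> K" for y
  proof -
    have "y \<in> vecs n" using that assms(2) by blast
    then obtain \<delta> where "\<delta> > 0" "\<forall>x\<in>vball n y \<delta>. vnorm m (\<lambda>i. f x i - f y i) < \<epsilon>"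
      using continuous_on_vecs_vball[OF assms(1) _ assms(4)] by blast
    then show ?thesis by (intro exI[of _ "min \<delta> (1/2)"]) (auto simp: vball_def)
  qed
  then obtain \<delta> where \<delta>: "\<And>y. y \<in> K \<Longrightarrow> 0 < \<delta> y \<and> \<delta> y < 1 \<and>
      (\<forall>x\<in>vball n y (\<delta> y). vnorm m (\<lambda>i. f x i - f y i) < \<epsilon>)"
    by metis
  have "K \<subseteq> (\<Union>y\<in>K. {x. vnorm n (\<lambda>i. x i - y i) < \<delta> y})"
    using \<delta> by force
  then obtain D where D: "D \<subseteq> K" "finite D" "K \<subseteq> (\<Union>y\<in>D. {x. vnorm n (\<lambda>i. x i - y i) < \<delta> y})"
    using compactE_image[of K K "\<lambda>y. {x. vnorm n (\<lambda>i. x i - y i) < \<delta> y}"] assms(3) open_vnorm_less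
    by blast
  obtain M :: nat and p where "D = p ` {i. i < M}"
    using finite_imp_nat_seg_image_inj_on[OF D(2)] by blast
  then have D_eq: "D = p ` {..<M}" by (simp add: lessThan_def)
  show ?thesis
  proof (rule that[of M p "\<delta> \<circ> p"])
    show "\<forall>j<M. p j \<in> K \<and> 0 < (\<delta> \<circ> p) j \<and> (\<delta> \<circ> p) j < 1"
      using D(1) D_eq \<delta> by auto
    show "K \<subseteq> (\<Union>j<M. vball n (p j) ((\<delta> \<circ> p) j))"
      using D(3) D_eq assms(2) by (auto simp: vball_def)
    show "\<forall>j<M. \<forall>x\<in>vball n (p j) ((\<delta> \<circ> p) j). vnorm m (\<lambda>i. f x i - f (p j) i) < \<epsilon>"
      using D(1) D_eq \<delta> by auto
  qed
qed

lemma good_cover_Ncov: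
  assumes "continuous_on (vecs n) f" "K \<subseteq> vecs n" "compact K" "\<epsilon> > 0"
  shows "good_cover n m f K \<epsilon> (Ncov n m f K \<epsilon>)"
proof -
  obtain M :: nat and p r where "\<forall>j<M. p j \<in> K \<and> 0 < r j \<and> r j < 1"
    "K \<subseteq> (\<Union>j<M. vball n (p j) (r j))"
    "\<forall>j<M. \<forall>x\<in>vball n (p j) (r j). vnorm m (\<lambda>i. f x i - f (p j) i) < \<epsilon>"
    using compact_vball_cover[where m = m, OF assms] .
  then have "good_cover n m f K \<epsilon> M"
    unfolding good_cover_def by blast
  then show ?thesis
    unfolding Ncov_def by (rule LeastI)
qed

lemma good_cover_separated_le:
  assumes cover: "good_cover n m f K \<epsilon> N" and "q ` {..<M} \<subseteq> K"
    and sep: "\<And>l j. l < M \<Longrightarrow> j < M \<Longrightarrow> l \<noteq> j \<Longrightarrow> 2 \<le> vnorm n (\<lambda>i. q l i - q j i)"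
  shows "M \<le> N"
proof -
  obtain c r where r: "\<forall>i<N. r i < 1" and K: "K \<subseteq> (\<Union>i<N. vball n (c i) (r i))"
    using cover unfolding good_cover_def by blast
  have "\<forall>l\<in>{..<M}. \<exists>i. i < N \<and> q l \<in> vball n (c i) (r i)"
    using K \<open>q ` {..<M} \<subseteq> K\<close> by blast
  then obtain g where "\<forall>l\<in>{..<M}. g l < N \<and> q l \<in> vball n (c (g l)) (r (g l))"
    by (rule bchoice[elim_format]) blast
  then have g: "\<And>l. l < M \<Longrightarrow> g l < N \<and> vnorm n (\<lambda>i. q l i - c (g l) i) < r (g l)"
    by (simp add: vball_def)
  have "inj_on g {..<M}"
  proof (rule inj_onI, rule ccontr)
    fix l j assume "l \<in> {..<M}" "j \<in> {..<M}" "g l = g j" "l \<noteq> j"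
    then have "vnorm n (\<lambda>i. q l i - q j i) < 2"
      using g[of l] g[of j] r vnorm_triangle[where k=n and x="q l" and y="c (g l)" and z="q j"]
        vnorm_diff_commute[of n "c (g l)" "q j"] by fastforce
    then show False using sep \<open>l \<in> {..<M}\<close> \<open>j \<in> {..<M}\<close> \<open>l \<noteq> j\<close> by fastforce
  qed
  moreover have "g ` {..<M} \<subseteq> {..<N}" using g by auto
  ultimately show ?thesis
    using card_inj_on_le[of g "{..<M}" "{..<N}"] by simp
qed

lemma compact_superset_Ncov_ge:
  assumes "continuous_on (vecs n) f" "K0 \<subseteq> vecs n" "compact K0" "\<epsilon> > 0" "n \<ge> 1"
  obtains K where "K0 \<subseteq> K" "K \<subseteq> vecs n" "compact K" "M \<le> Ncov n m f K \<epsilon>"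
proof -
  define q where "q = (\<lambda>j::nat. \<lambda>i::nat. if i = 0 then 2 * real j else 0)"
  define K where "K = K0 \<union> q ` {..<M}"
  have K: "K \<subseteq> vecs n" "compact K"
    using assms(2,3,5) by (auto simp: K_def q_def vecs_def intro: finite_imp_compact)
  have "M \<le> Ncov n m f K \<epsilon>"
  proof (rule good_cover_separated_le[OF good_cover_Ncov[OF assms(1) K assms(4)]])
    fix l j :: nat assume "l \<noteq> j"
    then show "2 \<le> vnorm n (\<lambda>i. q l i - q j i)"
      using abs_le_vnorm[of 0 n "\<lambda>i. q l i - q j i"] assms(5) by (auto simp: q_def)
  qed (auto simp: K_def)
  then show ?thesis
    using that K by (auto simp: K_def)
qed

definition ball_switch :: "nat \<Rightarrow> nat \<Rightarrow> nat \<Rightarrow> (nat \<Rightarrow> nat \<Rightarrow> real) \<Rightarrow> (nat \<Rightarrow> real)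
    \<Rightarrow> ((nat \<Rightarrow> real) \<Rightarrow> nat \<Rightarrow> real) \<Rightarrow> (nat \<Rightarrow> nat \<Rightarrow> real) \<Rightarrow> (nat \<Rightarrow> real) \<Rightarrow> (nat \<Rightarrow> real) \<Rightarrow> bool"
  where
  "ball_switch n m M p r L g x y \<longleftrightarrow>
     ((\<forall>j<M. x \<notin> vball n (p j) (r j)) \<and> (\<forall>i<m. y i = L x i)) \<or>
     (\<exists>j<M. x \<in> vball n (p j) (r j) \<and> (\<forall>i<m. y i = g j i))"

lemma ball_switch_approx:
  assumes "ball_switch n m M p r L (\<lambda>j. f (p j)) x y" "x \<in> vecs n"
    and "K0 \<subseteq> (\<Union>j<M. vball n (p j) (r j))"
    and "\<forall>x\<in>vecs n - K0. vnorm m (\<lambda>i. L x i - f x i) < \<epsilon>"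
    and "\<forall>j<M. \<forall>x\<in>vball n (p j) (r j). vnorm m (\<lambda>i. f x i - f (p j) i) < \<epsilon>"
  shows "vnorm m (\<lambda>i. y i - f x i) < \<epsilon>"
  using assms(1) unfolding ball_switch_def
proof
  assume "(\<forall>j<M. x \<notin> vball n (p j) (r j)) \<and> (\<forall>i<m. y i = L x i)"
  then show ?thesis
    using assms(2-4) vnorm_cong[of m "\<lambda>i. y i - f x i"] by auto
next
  assume "\<exists>j<M. x \<in> vball n (p j) (r j) \<and> (\<forall>i<m. y i = f (p j) i)"
  then obtain j where j: "j < M" "x \<in> vball n (p j) (r j)" "\<forall>i<m. y i = f (p j) i"
    by blast
  then have "vnorm m (\<lambda>i. y i - f x i) = vnorm m (\<lambda>i. f x i - f (p j) i)"
    using vnorm_cong[of m "\<lambda>i. y i - f x i" "\<lambda>i. f (p j) i - f x i"]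
      vnorm_diff_commute[of m "f (p j)" "f x"] by simp
  then show ?thesis
    using assms(5) j by simp
qed

definition id_mat :: "nat \<Rightarrow> nat \<Rightarrow> real" where
  "id_mat i j = (if i = j then 1 else 0)"

lemma affine_app_id_mat:
  "affine_app a b id_mat c z = (\<lambda>i. if i < b then (if i < a then z i else 0) + c i else 0)"
proof -
  have "(\<Sum>j<a. id_mat i j * z j) = (\<Sum>j<a. if i = j then z i else 0)" for i
    by (rule sum.cong) (auto simp: id_mat_def)
  then show ?thesis
    unfolding affine_app_def by (simp add: fun_eq_iff)
qed

lemma radial_eq_self: "v \<in> vecs k \<Longrightarrow> h (vnorm k v) = vnorm k v \<Longrightarrow> radial k h v = v"
  by (auto simp: radial_def vnorm_eq_0_vecs fun_eq_iff vecs_def)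

lemma radial_eq_zero: "h (vnorm k v) = 0 \<Longrightarrow> radial k h v = (\<lambda>_. 0)"
  by (auto simp: radial_def)

lemma radial_id: "i < k \<Longrightarrow> radial k id v i = v i"
  using abs_le_vnorm[of i k v] by (auto simp: radial_def)

definition cutoff :: "real \<Rightarrow> real \<Rightarrow> real" where
  "cutoff t0 t = (if t < t0 then 0 else t)"

lemma piecewise_diff_cutoff: "piecewise_diff (cutoff t0)"
  unfolding piecewise_diff_def
proof (intro exI[of _ "{t0}"] conjI allI impI)
  fix t :: real assume "t \<notin> {t0}"
  then consider "t < t0" | "t > t0" by force
  then show "cutoff t0 differentiable (at t)"
  proof cases
    case 1
    have "(cutoff t0 has_derivative (\<lambda>_. 0)) (at t)"
      by (rule has_derivative_transform_within_open[OF has_derivative_const open_lessThan, of t])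
         (use 1 in \<open>auto simp: cutoff_def\<close>)
    then show ?thesis unfolding differentiable_def by blast
  next
    case 2
    have "(cutoff t0 has_derivative (\<lambda>x. x)) (at t)"
      by (rule has_derivative_transform_within_open[OF has_derivative_ident open_greaterThan, of t])
         (use 2 in \<open>auto simp: cutoff_def\<close>)
    then show ?thesis unfolding differentiable_def by blast
  qed
qed simp

lemma piecewise_diff_id: "piecewise_diff id"
  unfolding piecewise_diff_def id_def by (auto intro: differentiableI has_derivative_ident)

definition shift :: "nat \<Rightarrow> (nat \<Rightarrow> nat \<Rightarrow> real) \<Rightarrow> nat \<Rightarrow> nat \<Rightarrow> real" where
  "shift n p k = (\<lambda>i. if i < n then - p k i else if i = n + k then 1 else 0)"

definition prev_shift :: "nat \<Rightarrow> (nat \<Rightarrow> nat \<Rightarrow> real) \<Rightarrow> nat \<Rightarrow> nat \<Rightarrow> real" where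
  "prev_shift n p k = (if k = 0 then (\<lambda>_. 0) else shift n p (k - 1))"

text \<open>The \<open>x\<close>-dependent part of the state after \<open>k\<close> hidden layers: \<open>x\<close> itself until \<open>x\<close> first
  lies in a ball \<open>B\<^sub>j\<close>, afterwards \<open>-shift j\<close>, which is what the zero vector produced by layer
  \<open>j\<close> looks like once the translation is undone.\<close>

fun ball_code :: "nat \<Rightarrow> (nat \<Rightarrow> nat \<Rightarrow> real) \<Rightarrow> (nat \<Rightarrow> real) \<Rightarrow> nat \<Rightarrow> nat
    \<Rightarrow> (nat \<Rightarrow> real) \<Rightarrow> nat \<Rightarrow> real" where
  "ball_code n p r M 0 x = x"
| "ball_code n p r M (Suc k) x =
     (if k < M \<and> (\<forall>j<k. x \<notin> vball n (p j) (r j)) \<and> x \<in> vball n (p k) (r k)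
      then (\<lambda>i. - shift n p k i) else ball_code n p r M k x)"

lemma ball_code_cases:
  "(ball_code n p r M k x = x \<and> (\<forall>j<min k M. x \<notin> vball n (p j) (r j))) \<or>
   (\<exists>j<min k M. x \<in> vball n (p j) (r j) \<and> ball_code n p r M k x = (\<lambda>i. - shift n p j i))"
  by (induction k) (auto simp: less_Suc_eq)

lemma shift_vecs: "shift n p k \<in> vecs (n + Suc k)"
  unfolding vecs_def shift_def by auto

lemma prev_shift_vecs: "prev_shift n p k \<in> vecs (n + k)"
  unfolding vecs_def prev_shift_def shift_def by auto

lemma ball_code_vecs:
  assumes "x \<in> vecs n" "\<forall>j<M. p j \<in> vecs n"
  shows "ball_code n p r M k x \<in> vecs (n + k)"
  using ball_code_cases[of n p r M k x] assms by (auto simp: vecs_def shift_def)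

lemma sum_power2_plus_shift:
  assumes "u \<in> vecs (n + k)"
  shows "(\<Sum>i<n + Suc k. (u i + shift n p k i)\<^sup>2)
       = (\<Sum>i<n. (u i - p k i)\<^sup>2) + (\<Sum>i\<in>{n..<n+k}. (u i)\<^sup>2) + 1"
proof -
  have sum_split: "(\<Sum>i<n + k. g i) = (\<Sum>i<n. g i) + (\<Sum>i\<in>{n..<n+k}. g i)" for g :: "nat \<Rightarrow> real"
    using sum.union_disjoint[of "{..<n}" "{n..<n+k}" g] by (simp add: ivl_disj_un_one ivl_disj_int)
  have "(\<Sum>i<n + Suc k. (u i + shift n p k i)\<^sup>2)
      = (\<Sum>i<n. (u i + shift n p k i)\<^sup>2) + (\<Sum>i\<in>{n..<n+k}. (u i + shift n p k i)\<^sup>2)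
        + (u (n+k) + shift n p k (n+k))\<^sup>2"
    by (simp add: sum_split)
  also have "\<dots> = (\<Sum>i<n. (u i - p k i)\<^sup>2) + (\<Sum>i\<in>{n..<n+k}. (u i)\<^sup>2) + 1"
    using assms by (simp add: shift_def vecs_def)
  finally show ?thesis .
qed

definition threshold :: "nat \<Rightarrow> (nat \<Rightarrow> real) \<Rightarrow> nat \<Rightarrow> real" where
  "threshold M r k = (if k < M then sqrt (1 + (r k)\<^sup>2) else 0)"

text \<open>The squared norm is \<open>|x - p\<^sub>k|\<^sup>2 + 1\<close> before capture and at least 2 after it, because
  coordinate \<open>n + j\<close> of \<open>-shift j\<close> is \<open>-1\<close>.\<close>

lemma ball_code_capture_iff:
  assumes x: "x \<in> vecs n" and balls: "\<forall>j<M. p j \<in> vecs n \<and> 0 < r j \<and> r j < 1"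
  shows "vnorm (n + Suc k) (\<lambda>i. ball_code n p r M k x i + shift n p k i) < threshold M r k
     \<longleftrightarrow> k < M \<and> (\<forall>j<k. x \<notin> vball n (p j) (r j)) \<and> x \<in> vball n (p k) (r k)"
proof (cases "k < M")
  case False
  then show ?thesis by (simp add: threshold_def not_less)
next
  case True
  let ?u = "ball_code n p r M k x"
  have "vnorm (n + Suc k) (\<lambda>i. ?u i + shift n p k i) < threshold M r k
      \<longleftrightarrow> (\<Sum>i<n. (?u i - p k i)\<^sup>2) + (\<Sum>i\<in>{n..<n+k}. (?u i)\<^sup>2) < (r k)\<^sup>2"
    using True sum_power2_plus_shift[OF ball_code_vecs[OF x]] balls
    by (simp add: threshold_def vnorm_def)
  also have "\<dots> \<longleftrightarrow> (\<forall>j<k. x \<notin> vball n (p j) (r j)) \<and> x \<in> vball n (p k) (r k)"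
    using ball_code_cases[of n p r M k x]
  proof
    assume "?u = x \<and> (\<forall>j<min k M. x \<notin> vball n (p j) (r j))"
    moreover have "(\<Sum>i\<in>{n..<n+k}. (x i)\<^sup>2) = 0" using x by (simp add: vecs_def)
    ultimately show ?thesis
      using True x balls vnorm_less_iff_power2[of "r k" n "\<lambda>i. x i - p k i"]
      by (auto simp: vball_def vnorm_def min_def)
  next
    assume "\<exists>j<min k M. x \<in> vball n (p j) (r j) \<and> ?u = (\<lambda>i. - shift n p j i)"
    then obtain j where j: "j < k" "x \<in> vball n (p j) (r j)" "?u = (\<lambda>i. - shift n p j i)" by auto
    then have "(\<Sum>i\<in>{n..<n+k}. (?u i)\<^sup>2) = (\<Sum>i\<in>{n..<n+k}. if i = n + j then 1 else 0)"
      by (intro sum.cong) (auto simp: shift_def)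
    also have "\<dots> = 1" using j by simp
    moreover have "(r k)\<^sup>2 < 1" using True balls by (auto simp: abs_square_less_1)
    moreover have "0 \<le> (\<Sum>i<n. (?u i - p k i)\<^sup>2)" by (simp add: sum_nonneg)
    ultimately have "\<not> (\<Sum>i<n. (?u i - p k i)\<^sup>2) + (\<Sum>i\<in>{n..<n+k}. (?u i)\<^sup>2) < (r k)\<^sup>2"
      by linarith
    then show ?thesis using j by auto
  qed
  finally show ?thesis using True by simp
qed

definition hidden_state :: "nat \<Rightarrow> (nat \<Rightarrow> nat \<Rightarrow> real) \<Rightarrow> (nat \<Rightarrow> real) \<Rightarrow> nat \<Rightarrow> nat
    \<Rightarrow> (nat \<Rightarrow> real) \<Rightarrow> nat \<Rightarrow> real" where
  "hidden_state n p r M k x = (\<lambda>i. ball_code n p r M k x i + prev_shift n p k i)"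

definition hidden_layer :: "nat \<Rightarrow> (nat \<Rightarrow> nat \<Rightarrow> real) \<Rightarrow> (nat \<Rightarrow> real) \<Rightarrow> nat \<Rightarrow> nat
    \<Rightarrow> (nat \<Rightarrow> nat \<Rightarrow> real) \<times> (nat \<Rightarrow> real) \<times> (real \<Rightarrow> real)" where
  "hidden_layer n p r M k =
     (id_mat, \<lambda>i. shift n p k i - prev_shift n p k i, cutoff (threshold M r k))"

lemma hidden_layer_step:
  assumes x: "x \<in> vecs n" and balls: "\<forall>j<M. p j \<in> vecs n \<and> 0 < r j \<and> r j < 1"
  shows "radial (n + Suc k) (cutoff (threshold M r k))
           (affine_app (n + k) (n + Suc k) id_mat (\<lambda>i. shift n p k i - prev_shift n p k i)
             (hidden_state n p r M k x))
         = hidden_state n p r M (Suc k) x"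
proof -
  define z where "z = (\<lambda>i. ball_code n p r M k x i + shift n p k i)"
  have "ball_code n p r M k x \<in> vecs (n + k)"
    using ball_code_vecs x balls by blast
  then have affine: "affine_app (n + k) (n + Suc k) id_mat (\<lambda>i. shift n p k i - prev_shift n p k i)
      (hidden_state n p r M k x) = z"
    using prev_shift_vecs[of n p k] shift_vecs[of n p k]
    by (auto simp: affine_app_id_mat hidden_state_def z_def vecs_def fun_eq_iff)
  show ?thesis
  proof (cases "vnorm (n + Suc k) z < threshold M r k")
    case True
    then have "k < M \<and> (\<forall>j<k. x \<notin> vball n (p j) (r j)) \<and> x \<in> vball n (p k) (r k)"
      using ball_code_capture_iff[OF x balls] by (simp add: z_def)
    then have "hidden_state n p r M (Suc k) x = (\<lambda>_. 0)"
      by (simp add: hidden_state_def prev_shift_def)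
    moreover have "radial (n + Suc k) (cutoff (threshold M r k)) z = (\<lambda>_. 0)"
      using True by (intro radial_eq_zero) (simp add: cutoff_def)
    ultimately show ?thesis using affine by simp
  next
    case False
    then have "\<not> (k < M \<and> (\<forall>j<k. x \<notin> vball n (p j) (r j)) \<and> x \<in> vball n (p k) (r k))"
      using ball_code_capture_iff[OF x balls] by (simp add: z_def)
    then have "hidden_state n p r M (Suc k) x = z"
      unfolding hidden_state_def prev_shift_def z_def ball_code.simps by auto
    moreover have "radial (n + Suc k) (cutoff (threshold M r k)) z = z"
      using False \<open>ball_code n p r M k x \<in> vecs (n + k)\<close> shift_vecs[of n p k]
      by (intro radial_eq_self) (auto simp: cutoff_def z_def vecs_def)
    ultimately show ?thesis using affine by simp
  qed
qed

lemma feedforward_hidden_layers: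
  assumes x: "x \<in> vecs n" and balls: "\<forall>j<M. p j \<in> vecs n \<and> 0 < r j \<and> r j < 1"
    and "k \<le> N"
  shows "feedforward (map (\<lambda>i. n + i) [k..<N+1] @ [m])
           (map (hidden_layer n p r M) [k..<N] @ [(W, b, id)]) (hidden_state n p r M k x)
         = radial m id (affine_app (n + N) m W b (hidden_state n p r M N x))"
  using \<open>k \<le> N\<close>
proof (induction k rule: inc_induct)
  case (step k)
  have "[k..<N+1] = k # [Suc k..<N+1]" "[Suc k..<N+1] = Suc k # [Suc (Suc k)..<N+1]"
    "[k..<N] = k # [Suc k..<N]"
    using step.hyps by (simp_all add: upt_conv_Cons)
  then show ?case
    using step.IH hidden_layer_step[OF x balls] by (simp add: hidden_layer_def)
qed simp

text \<open>Chosen so that \<open>W x = A x\<close> for \<open>x \<in> \<real>\<^sup>n\<close> and \<open>W (-shift j) + c = g j\<close>.\<close>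

definition output_weight :: "nat \<Rightarrow> nat \<Rightarrow> (nat \<Rightarrow> nat \<Rightarrow> real) \<Rightarrow> (nat \<Rightarrow> real)
    \<Rightarrow> (nat \<Rightarrow> nat \<Rightarrow> real) \<Rightarrow> (nat \<Rightarrow> nat \<Rightarrow> real) \<Rightarrow> nat \<Rightarrow> nat \<Rightarrow> real" where
  "output_weight n M A c p g i j =
     (if j < n then A i j
      else if j < n + M then (\<Sum>l<n. A i l * p (j - n) l) + c i - g (j - n) i else 0)"

lemma sum_output_weight_vecs:
  assumes "x \<in> vecs n"
  shows "(\<Sum>l<n + N. output_weight n M A c p g i l * x l) = (\<Sum>l<n. A i l * x l)"
proof -
  have "(\<Sum>l<n + N. output_weight n M A c p g i l * x l)
      = (\<Sum>l<n. output_weight n M A c p g i l * x l)"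
    using assms by (intro sum.mono_neutral_right) (auto simp: vecs_def)
  then show ?thesis by (simp add: output_weight_def)
qed

lemma sum_output_weight_shift:
  assumes "j < M" "M \<le> N"
  shows "(\<Sum>l<n + N. output_weight n M A c p g i l * shift n p j l) = c i - g j i"
proof -
  have "(\<Sum>l<n + N. output_weight n M A c p g i l * shift n p j l)
      = (\<Sum>l\<in>insert (n + j) {..<n}. output_weight n M A c p g i l * shift n p j l)"
    using assms by (intro sum.mono_neutral_right) (auto simp: shift_def)
  also have "\<dots> = output_weight n M A c p g i (n + j) * shift n p j (n + j)
      + (\<Sum>l<n. output_weight n M A c p g i l * shift n p j l)"
    by simp
  also have "\<dots> = c i - g j i"
    using assms by (simp add: output_weight_def shift_def sum_negf)
  finally show ?thesis .
qed

lemma radial_network_ball_switch: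
  assumes "M \<le> N" and balls: "\<forall>j<M. p j \<in> vecs n \<and> 0 < r j \<and> r j < 1"
  obtains F where "is_radial_nn_function (map (\<lambda>i. n + i) [0..<N+1] @ [m]) F"
    "\<And>x. x \<in> vecs n \<Longrightarrow> ball_switch n m M p r (affine_app n m A c) g x (F x)"
proof -
  define W where "W = output_weight n M A c p g"
  define b where "b = (\<lambda>i. c i - (\<Sum>l<n + N. W i l * prev_shift n p N l))"
  define layers where "layers = map (hidden_layer n p r M) [0..<N] @ [(W, b, id)]"
  define F where "F = feedforward (map (\<lambda>i. n + i) [0..<N+1] @ [m]) layers"
  have "is_radial_nn_function (map (\<lambda>i. n + i) [0..<N+1] @ [m]) F"
    unfolding is_radial_nn_function_def F_def
    by (intro exI[of _ layers])
      (auto simp: layers_def hidden_layer_def piecewise_diff_cutoff piecewise_diff_id)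
  moreover have F_eq: "F x i = (\<Sum>l<n + N. W i l * ball_code n p r M N x l) + c i"
    if x: "x \<in> vecs n" and i: "i < m" for x i
  proof -
    have "hidden_state n p r M 0 x = x"
      by (simp add: hidden_state_def prev_shift_def)
    then have "F x = radial m id (affine_app (n + N) m W b (hidden_state n p r M N x))"
      using feedforward_hidden_layers[OF x balls, of 0 N m W b] by (simp add: F_def layers_def)
    then show ?thesis
      using i
      by (simp add: radial_id affine_app_def hidden_state_def b_def distrib_left sum.distrib)
  qed
  moreover have "ball_switch n m M p r (affine_app n m A c) g x (F x)" if x: "x \<in> vecs n" for x
    using ball_code_cases[of n p r M N x]
  proof
    assume "ball_code n p r M N x = x \<and> (\<forall>j<min N M. x \<notin> vball n (p j) (r j))"
    then show ?thesis
      using \<open>M \<le> N\<close>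
      by (simp add: ball_switch_def F_eq[OF x] W_def affine_app_def sum_output_weight_vecs[OF x])
  next
    assume "\<exists>j<min N M. x \<in> vball n (p j) (r j) \<and> ball_code n p r M N x = (\<lambda>i. - shift n p j i)"
    then obtain j where "j < M" "x \<in> vball n (p j) (r j)"
      and "ball_code n p r M N x = (\<lambda>i. - shift n p j i)"
      by auto
    then show ?thesis
      using \<open>M \<le> N\<close>
      by (auto simp: ball_switch_def F_eq[OF x] W_def sum_negf sum_output_weight_shift)
  qed
  ultimately show ?thesis using that by blast
qed

theorem theorem1:
  fixes n m :: nat and f :: "(nat \<Rightarrow> real) \<Rightarrow> (nat \<Rightarrow> real)" and \<epsilon> :: real
  assumes "n \<ge> 1" and "m \<ge> 1"
    and "asymptotically_affine n m f"
    and "\<epsilon> > 0"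
  shows "\<exists>K F. K \<subseteq> vecs n \<and> compact K \<and>
           is_radial_nn_function
             (map (\<lambda>i. n + i) [0..<Ncov n m f K \<epsilon> + 1] @ [m]) F \<and>
           (\<forall>x \<in> vecs n. vnorm m (\<lambda>i. F x i - f x i) < \<epsilon>)"
proof -
  have cont: "continuous_on (vecs n) f"
    using assms(3) by (simp add: asymptotically_affine_def)
  obtain A c K0 where K0: "K0 \<subseteq> vecs n" "compact K0"
    and affine_close: "\<forall>x\<in>vecs n - K0. vnorm m (\<lambda>i. affine_app n m A c x i - f x i) < \<epsilon>"
    using assms(3,4) unfolding asymptotically_affine_def by blast
  obtain M :: nat and p r where balls: "\<forall>j<M. p j \<in> K0 \<and> 0 < r j \<and> r j < 1"
    and cover: "K0 \<subseteq> (\<Union>j<M. vball n (p j) (r j))"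
    and osc: "\<forall>j<M. \<forall>x\<in>vball n (p j) (r j). vnorm m (\<lambda>i. f x i - f (p j) i) < \<epsilon>"
    using compact_vball_cover[where m = m, OF cont K0 assms(4)] .
  obtain K where K: "K \<subseteq> vecs n" "compact K" and layers: "M \<le> Ncov n m f K \<epsilon>"
    using compact_superset_Ncov_ge[OF cont K0 assms(4,1)] by metis
  have "\<forall>j<M. p j \<in> vecs n \<and> 0 < r j \<and> r j < 1"
    using balls K0(1) by blast
  then obtain F
    where F: "is_radial_nn_function (map (\<lambda>i. n + i) [0..<Ncov n m f K \<epsilon> + 1] @ [m]) F"
    and switch: "\<And>x. x \<in> vecs n \<Longrightarrow> ball_switch n m M p r (affine_app n m A c) (\<lambda>j. f (p j)) x (F x)"
    using radial_network_ball_switch[OF layers, where m = m and A = A and c = c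
        and g = "\<lambda>j. f (p j)"] by blast
  have "vnorm m (\<lambda>i. F x i - f x i) < \<epsilon>" if "x \<in> vecs n" for x
    using ball_switch_approx[OF switch[OF that] that cover affine_close osc] .
  then show ?thesis
    using K F by blast
qed

end
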